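(* Let $f\in\mathcal S_{\mathbf M}$ and $n\in\mathbb N$, and let $\|\cdot\|$ denote either the Luxemburg norm $\|\cdot\|_{\mathbf M}$ or the Orlicz norm $\|\cdot\|^*_{\mathbf M}$. Then $$E_n(f):=\inf_{t_{n-1}\in\mathcal T_{n-1}}\|f-t_{n-1}\|=\|f-S_{n-1}(f)\|,$$ where $S_{n-1}(f)(x)=\sum_{|k|\le n-1}\widehat f(k)e^{\mathrm{i}kx}$ is the Fourier sum of $f$.
   Context: $L$ is the space of $2\pi$-periodic Lebesgue integrable functions, with Fourier coefficients $\widehat f(k)=(2\pi)^{-1}\int_0^{2\pi}f(x)e^{-\mathrm{i}kx}\,dx$, $k\in\mathbb Z$. Let $\mathbf M=\{M_k\}_{k\in\mathbb Z}$ be a sequence of Orlicz functions on $[0,\infty)$ (each $M_k$ nondecreasing and convex, $M_k(0)=0$, $M_k(u)\to\infty$ as $u\to\infty$). $\mathcal S_{\mathbf M}$ is the space of all $f\in L$ whose Luxemburg norm $\|f\|_{\mathbf M}=\inf\{a>0:\sum_{k\in\mathbb Z}M_k(|\widehat f(k)|/a)\le 1\}$ is finite (functions $f,g$ with $\|f-g\|_{\mathbf M}=0$ are identified). With $\tilde M_k(v)=\sup\{uv-M_k(u):u\ge0\}$, let $\Lambda$ be the set of sequences $\lambda=\{\lambda_k\}_{k\in\mathbb Z}$ of positive numbers with $\sum_k\tilde M_k(\lambda_k)\le1$; the Orlicz norm is $\|f\|^*_{\mathbf M}=\sup\{\sum_{k\in\mathbb Z}\lambda_k|\widehat f(k)|:\lambda\in\Lambda\}$.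 $\mathcal T_{m}$ denotes the set of trigonometric polynomials $\sum_{|k|\le m}c_ke^{\mathrm{i}kx}$ with arbitrary complex $c_k$. *)

theory Defs
  imports "HOL-Analysis.Analysis"
begin

definition in_L :: "(real \<Rightarrow> complex) \<Rightarrow> bool" where
  "in_L f \<longleftrightarrow> (\<forall>x. f (x + 2 * pi) = f x) \<and> f absolutely_integrable_on {0..2 * pi}"

definition fourier_coeff :: "(real \<Rightarrow> complex) \<Rightarrow> int \<Rightarrow> complex" where
  "fourier_coeff f k =
     integral {0..2 * pi} (\<lambda>x. f x * exp (- \<i> * of_int k * of_real x)) / of_real (2 * pi)"

definition orlicz_function :: "(real \<Rightarrow> real) \<Rightarrow> bool" where
  "orlicz_function M \<longleftrightarrow> mono_on {0..} M \<and> convex_on {0..} M \<and> M 0 = 0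
     \<and> filterlim M at_top at_top"

text \<open>Complementary function, possibly infinite (values in ennreal; it is always \<ge> 0).\<close>
definition compl_fun :: "(real \<Rightarrow> real) \<Rightarrow> real \<Rightarrow> ennreal" where
  "compl_fun M v = (SUP u\<in>{0..}. ennreal (u * v - M u))"

text \<open>Luxemburg norm (infinite when no admissible a exists).\<close>
definition lux_norm :: "(int \<Rightarrow> real \<Rightarrow> real) \<Rightarrow> (real \<Rightarrow> complex) \<Rightarrow> ennreal" where
  "lux_norm M f = (INF a\<in>{a::real. a > 0 \<and>
       infsum (\<lambda>k. ennreal (M k (cmod (fourier_coeff f k) / a))) UNIV \<le> 1}. ennreal a)"

definition Lambda_set :: "(int \<Rightarrow> real \<Rightarrow> real) \<Rightarrow> (int \<Rightarrow> real) set" where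
  "Lambda_set M = {lam. (\<forall>k. lam k > 0) \<and> infsum (\<lambda>k. compl_fun (M k) (lam k)) UNIV \<le> 1}"

definition orlicz_norm :: "(int \<Rightarrow> real \<Rightarrow> real) \<Rightarrow> (real \<Rightarrow> complex) \<Rightarrow> ennreal" where
  "orlicz_norm M f = (SUP lam\<in>Lambda_set M.
       infsum (\<lambda>k. ennreal (lam k * cmod (fourier_coeff f k))) UNIV)"

definition S_M :: "(int \<Rightarrow> real \<Rightarrow> real) \<Rightarrow> (real \<Rightarrow> complex) set" where
  "S_M M = {f. in_L f \<and> lux_norm M f < \<infinity>}"

definition trig_polys :: "int \<Rightarrow> (real \<Rightarrow> complex) set" where
  "trig_polys m = {t. \<exists>c::int \<Rightarrow> complex.
      t = (\<lambda>x. \<Sum>k\<in>{-m..m}. c k * exp (\<i> * of_int k * of_real x))}"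

definition fourier_sum :: "int \<Rightarrow> (real \<Rightarrow> complex) \<Rightarrow> real \<Rightarrow> complex" where
  "fourier_sum m f x = (\<Sum>k\<in>{-m..m}. fourier_coeff f k * exp (\<i> * of_int k * of_real x))"

end

theory Submission imports Defs begin

text \<open>Subtracting a trigonometric polynomial t of degree m from f changes only the Fourier
  coefficients with index in [-m, m], and the Fourier sum S_m f makes exactly these zero.
  Hence every coefficient of f - S_m f has modulus at most that of the corresponding
  coefficient of f - t. Both the Luxemburg and the Orlicz norm depend monotonically on the
  moduli of the Fourier coefficients, so f - S_m f has the least norm among all f - t.\<close>

lemma has_integral_exp_int:
  fixes j :: int
  shows "((\<lambda>x::real. exp (\<i> * of_int j * of_real x))
           has_integral (if j = 0 then of_real (2 * pi) else 0)) {0..2 * pi}"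
proof (cases "j = 0")
  case True
  then show ?thesis
    using has_integral_const_real[of "1::complex" 0 "2 * pi"] by (simp add: scaleR_conv_of_real)
next
  case False
  define F where "F = (\<lambda>x::real. exp (\<i> * of_int j * of_real x) / (\<i> * of_int j))"
  have "(F has_vector_derivative exp (\<i> * of_int j * of_real x)) (at x within {0..2 * pi})"
    for x
  proof -
    have "((\<lambda>z. exp (\<i> * of_int j * z) / (\<i> * of_int j))
           has_field_derivative exp (\<i> * of_int j * of_real x)) (at (of_real x))"
      using False by (auto intro!: derivative_eq_intros simp: field_simps)
    from has_vector_derivative_real_field[OF this] show ?thesis
      unfolding F_def by simp
  qed
  then have "((\<lambda>x::real. exp (\<i> * of_int j * of_real x)) has_integral (F (2 * pi) - F 0))
               {0..2 * pi}"
    by (intro fundamental_theorem_of_calculus) auto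
  moreover have "exp (\<i> * of_int j * of_real (2 * pi)) = 1"
    using exp_integer_2pi[of "of_int j"] by (simp add: mult_ac)
  ultimately show ?thesis
    using False by (simp add: F_def)
qed

lemma has_integral_trig_poly_times_exp:
  fixes c :: "int \<Rightarrow> complex" and m k :: int
  shows "((\<lambda>x::real. (\<Sum>j\<in>{-m..m}. c j * exp (\<i> * of_int j * of_real x))
                      * exp (- \<i> * of_int k * of_real x))
           has_integral (if k \<in> {-m..m} then c k * of_real (2 * pi) else 0)) {0..2 * pi}"
proof -
  have exp_diff: "exp (\<i> * of_int j * of_real x) * exp (- \<i> * of_int k * of_real x)
                  = exp (\<i> * of_int (j - k) * of_real x)" for j and x :: real
    by (simp add: exp_add[symmetric] algebra_simps)
  have "((\<lambda>x::real. \<Sum>j\<in>{-m..m}. c j * exp (\<i> * of_int (j - k) * of_real x))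
          has_integral (\<Sum>j\<in>{-m..m}. c j * (if j - k = 0 then of_real (2 * pi) else 0)))
          {0..2 * pi}"
    by (intro has_integral_sum finite_atLeastAtMost_int has_integral_mult_right
        has_integral_exp_int)
  moreover have "(\<Sum>j\<in>{-m..m}. c j * (if j - k = 0 then (of_real (2 * pi)::complex) else 0))
                 = (if k \<in> {-m..m} then c k * of_real (2 * pi) else 0)"
    by (simp add: if_distrib[of "\<lambda>z. c _ * z"] sum.delta cong: if_cong)
  moreover have "(\<Sum>j\<in>{-m..m}. c j * exp (\<i> * of_int j * of_real x))
                   * exp (- \<i> * of_int k * of_real x)
                 = (\<Sum>j\<in>{-m..m}. c j * exp (\<i> * of_int (j - k) * of_real x))" for x :: real
    unfolding sum_distrib_right by (rule sum.cong[OF refl]) (metis exp_diff mult.assoc)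
  ultimately show ?thesis
    by simp
qed

lemma integrable_times_exp:
  assumes "in_L f"
  shows "(\<lambda>x. f x * exp (- \<i> * of_int k * of_real x)) integrable_on {0..2 * pi}"
proof -
  have "(\<lambda>x. exp (- \<i> * of_int k * of_real x) * f x) absolutely_integrable_on {0..2 * pi}"
  proof (rule absolutely_integrable_bounded_measurable_product[OF bilinear_times])
    show "(\<lambda>x::real. exp (- \<i> * of_int k * of_real x)) \<in> borel_measurable (lebesgue_on {0..2 * pi})"
      by (intro continuous_imp_measurable_on_sets_lebesgue continuous_intros) auto
    show "bounded ((\<lambda>x::real. exp (- \<i> * of_int k * of_real x)) ` {0..2 * pi})"
      by (rule bounded_subset[OF bounded_cball[of 0 1]]) (auto simp: norm_exp)
  qed (use assms in \<open>auto simp: in_L_def\<close>)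
  then show ?thesis
    by (simp add: mult.commute set_lebesgue_integral_eq_integral(1))
qed

lemma fourier_coeff_diff_trig_poly:
  fixes c :: "int \<Rightarrow> complex" and m k :: int
  assumes "in_L f"
  shows "fourier_coeff (\<lambda>x. f x - (\<Sum>j\<in>{-m..m}. c j * exp (\<i> * of_int j * of_real x))) k
         = fourier_coeff f k - (if k \<in> {-m..m} then c k else 0)"
  unfolding fourier_coeff_def left_diff_distrib
  using integral_diff[OF integrable_times_exp[OF assms]
      has_integral_integrable[OF has_integral_trig_poly_times_exp[of c m k]]]
    integral_unique[OF has_integral_trig_poly_times_exp[of c m k]]
  by (simp add: diff_divide_distrib)

lemma norm_fourier_coeff_diff_fourier_sum_le:
  assumes "in_L f" and "t \<in> trig_polys m"
  shows "cmod (fourier_coeff (\<lambda>x. f x - fourier_sum m f x) k)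
         \<le> cmod (fourier_coeff (\<lambda>x. f x - t x) k)"
proof -
  obtain c where t: "t = (\<lambda>x. \<Sum>j\<in>{-m..m}. c j * exp (\<i> * of_int j * of_real x))"
    using assms(2) unfolding trig_polys_def by blast
  show ?thesis
    unfolding t fourier_sum_def fourier_coeff_diff_trig_poly[OF assms(1)]
    by (cases "k \<in> {-m..m}") simp_all
qed

lemma fourier_sum_minimizes:
  fixes N :: "(real \<Rightarrow> complex) \<Rightarrow> 'a::complete_lattice"
  assumes "in_L f"
    and N_mono: "\<And>g h. (\<And>k. cmod (fourier_coeff g k) \<le> cmod (fourier_coeff h k)) \<Longrightarrow> N g \<le> N h"
  shows "(INF t\<in>trig_polys m. N (\<lambda>x. f x - t x)) = N (\<lambda>x. f x - fourier_sum m f x)"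
proof (rule antisym)
  have "fourier_sum m f \<in> trig_polys m"
    unfolding trig_polys_def fourier_sum_def by blast
  then show "(INF t\<in>trig_polys m. N (\<lambda>x. f x - t x)) \<le> N (\<lambda>x. f x - fourier_sum m f x)"
    by (rule INF_lower)
  show "N (\<lambda>x. f x - fourier_sum m f x) \<le> (INF t\<in>trig_polys m. N (\<lambda>x. f x - t x))"
    using norm_fourier_coeff_diff_fourier_sum_le[OF assms(1)] by (blast intro: INF_greatest N_mono)
qed

lemma lux_norm_mono:
  assumes M: "\<And>k. mono_on {0..} (M k)"
    and le: "\<And>k. cmod (fourier_coeff g k) \<le> cmod (fourier_coeff h k)"
  shows "lux_norm M g \<le> lux_norm M h"
  unfolding lux_norm_def
proof (rule INF_mono)
  fix a
  assume a: "a \<in> {a. a > 0 \<and> infsum (\<lambda>k. ennreal (M k (cmod (fourier_coeff h k) / a))) UNIV \<le> 1}"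
  have "M k (cmod (fourier_coeff g k) / a) \<le> M k (cmod (fourier_coeff h k) / a)" for k
    using a le[of k] by (intro mono_onD[OF M]) (auto simp: divide_right_mono)
  then have "infsum (\<lambda>k. ennreal (M k (cmod (fourier_coeff g k) / a))) UNIV
             \<le> infsum (\<lambda>k. ennreal (M k (cmod (fourier_coeff h k) / a))) UNIV"
    by (intro infsum_mono nonneg_summable_on_complete ennreal_leI) auto
  with a show "\<exists>a'\<in>{a. a > 0 \<and> infsum (\<lambda>k. ennreal (M k (cmod (fourier_coeff g k) / a))) UNIV \<le> 1}.
                 ennreal a' \<le> ennreal a"
    by (auto intro: order_trans)
qed

lemma orlicz_norm_mono:
  assumes le: "\<And>k. cmod (fourier_coeff g k) \<le> cmod (fourier_coeff h k)"
  shows "orlicz_norm M g \<le> orlicz_norm M h"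
  unfolding orlicz_norm_def
proof (rule SUP_mono)
  fix lam
  assume lam: "lam \<in> Lambda_set M"
  then have "lam k * cmod (fourier_coeff g k) \<le> lam k * cmod (fourier_coeff h k)" for k
    using le[of k] by (intro mult_left_mono) (auto simp: Lambda_set_def less_imp_le)
  then have "infsum (\<lambda>k. ennreal (lam k * cmod (fourier_coeff g k))) UNIV
             \<le> infsum (\<lambda>k. ennreal (lam k * cmod (fourier_coeff h k))) UNIV"
    by (intro infsum_mono nonneg_summable_on_complete ennreal_leI) auto
  with lam show "\<exists>lam'\<in>Lambda_set M. infsum (\<lambda>k. ennreal (lam k * cmod (fourier_coeff g k))) UNIV
                   \<le> infsum (\<lambda>k. ennreal (lam' k * cmod (fourier_coeff h k))) UNIV"
    by blast
qed

theorem lemma2: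
  fixes M :: "int \<Rightarrow> real \<Rightarrow> real" and f :: "real \<Rightarrow> complex" and n :: nat
  assumes "\<forall>k. orlicz_function (M k)"
    and "f \<in> S_M M"
    and "n \<ge> 1"
  shows "(INF t\<in>trig_polys (int n - 1). lux_norm M (\<lambda>x. f x - t x))
           = lux_norm M (\<lambda>x. f x - fourier_sum (int n - 1) f x)
       \<and> (INF t\<in>trig_polys (int n - 1). orlicz_norm M (\<lambda>x. f x - t x))
           = orlicz_norm M (\<lambda>x. f x - fourier_sum (int n - 1) f x)"
proof -
  have f: "in_L f"
    using assms(2) by (simp add: S_M_def)
  have M_mono: "mono_on {0..} (M k)" for k
    using assms(1) by (simp add: orlicz_function_def)
  have "(INF t\<in>trig_polys m. lux_norm M (\<lambda>x. f x - t x))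
          = lux_norm M (\<lambda>x. f x - fourier_sum m f x)" for m
    by (rule fourier_sum_minimizes[OF f lux_norm_mono[OF M_mono]])
  moreover have "(INF t\<in>trig_polys m. orlicz_norm M (\<lambda>x. f x - t x))
                   = orlicz_norm M (\<lambda>x. f x - fourier_sum m f x)" for m
    by (rule fourier_sum_minimizes[OF f orlicz_norm_mono])
  ultimately show ?thesis
    by blast
qed

end
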